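(* Let $S$ be a rectangular domain and $\ell,\ell'\in C(S)$. Then $\ell'\succeq\ell$ if and only if every vertex of $\ell'$ belongs to $A(\ell)$, where $$A(\ell)=\bigcup_{(t_*,x_* )\text{ vertex of }\ell}\{(t,x)\in\tilde{\mathbb{Z}}^2: t\ge t_*+|x-x_*|\}.$$
   Context: Lattice and domains. $\tilde{\mathbb{Z}}^2=\{(t,x)\in\mathbb{Z}^2:t+x\text{ even}\}$; edges join points at Euclidean distance $\sqrt2$. A rectangular domain is a nonempty set $S=\{(t,x)\in\tilde{\mathbb{Z}}^2: a\le t+x\le b,\ c\le t-x\le d\}$ with even integers $a\le b$, $c\le d$. $\bar S$ is $S$ together with all points joined by an edge to a point of $S$; $\partial\bar S=\bar S\setminus S$; $\mathbb{E}(\bar S)$ is the set of edges with an endpoint in $S$. Broken traces. A broken trace is $\ell=(y_0,e_1,y_1,\dots,e_n,y_n)$, $n\ge1$, with $y_i=(t_i,x_i)\in\tilde{\mathbb{Z}}^2$, $e_i=\langle y_{i-1},y_i\rangle$, $x_i=x_{i-1}+1$, $t_i-t_{i-1}\in\{-1,1\}$. Its vertices are $y_0,\dots,y_n$. - $D(\ell)=\{x_0,\dots,x_n\}$, and $t_\ell(x)$ is the $t$-coordinate of the vertex of $\ell$ with second coordinate $x$. - $\ell\subseteq\bar S$ means $y_0,y_n\in\bar S$, $y_1,\dots,y_{n-1}\in S$, all $e_i\in\mathbb{E}(\bar S)$. - $C(S)$ is the set of $\ell\subseteq\bar S$ with $y_0,y_n\in\partial\bar S$. Order. $\ell'\succeq\ell$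 means that $t_{\ell'}(x)\ge t_\ell(x)$ for all $x\in D(\ell)\cap D(\ell')$, and that $t_{\ell'}(x')\ge t_\ell(x)$ for some $x'\in D(\ell')$, $x\in D(\ell)$. *)

theory Defs
  imports Main
begin

type_synonym pt = "int \<times> int"   (* (t, x) *)

definition lattice :: "pt set" where
  "lattice = {(t, x). even (t + x)}"

definition adj :: "pt \<Rightarrow> pt \<Rightarrow> bool" where
  "adj p q \<longleftrightarrow> p \<in> lattice \<and> q \<in> lattice \<and>
     \<bar>fst p - fst q\<bar> = 1 \<and> \<bar>snd p - snd q\<bar> = 1"

definition rect_dom :: "int \<Rightarrow> int \<Rightarrow> int \<Rightarrow> int \<Rightarrow> pt set" where
  "rect_dom a b c d = {(t, x) \<in> lattice. a \<le> t + x \<and> t + x \<le> b \<and> c \<le> t - x \<and> t - x \<le> d}"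

definition closure_dom :: "pt set \<Rightarrow> pt set" where
  "closure_dom S = S \<union> {q. \<exists>p\<in>S. adj p q}"

definition bdry :: "pt set \<Rightarrow> pt set" where
  "bdry S = closure_dom S - S"

(* edges are unordered pairs {p,q} of adjacent points; E(S bar): an endpoint in S *)
definition edges_cl :: "pt set \<Rightarrow> pt set set" where
  "edges_cl S = {{p, q} | p q. adj p q \<and> (p \<in> S \<or> q \<in> S)}"

(* a broken trace is given by its list of vertices y_0, ..., y_n *)
definition broken_trace :: "pt list \<Rightarrow> bool" where
  "broken_trace l \<longleftrightarrow> length l \<ge> 2 \<and> set l \<subseteq> lattice \<and>
     (\<forall>i. Suc i < length l \<longrightarrow>
        snd (l ! Suc i) = snd (l ! i) + 1 \<and> fst (l ! Suc i) - fst (l ! i) \<in> {-1, 1})"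

definition D :: "pt list \<Rightarrow> int set" where
  "D l = snd ` set l"

definition t_of :: "pt list \<Rightarrow> int \<Rightarrow> int" where
  "t_of l x = (THE t. (t, x) \<in> set l)"

definition trace_in :: "pt list \<Rightarrow> pt set \<Rightarrow> bool" where
  "trace_in l S \<longleftrightarrow> broken_trace l \<and>
     hd l \<in> closure_dom S \<and> last l \<in> closure_dom S \<and>
     (\<forall>i. 0 < i \<and> i < length l - 1 \<longrightarrow> l ! i \<in> S) \<and>
     (\<forall>i. Suc i < length l \<longrightarrow> {l ! i, l ! Suc i} \<in> edges_cl S)"

definition C :: "pt set \<Rightarrow> pt list set" where
  "C S = {l. trace_in l S \<and> hd l \<in> bdry S \<and> last l \<in> bdry S}"

(* succeq l' l  means  l' \<succeq> l *)
definition succeq :: "pt list \<Rightarrow> pt list \<Rightarrow> bool" where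
  "succeq l' l \<longleftrightarrow> (\<forall>x \<in> D l \<inter> D l'. t_of l' x \<ge> t_of l x) \<and>
     (\<exists>x' \<in> D l'. \<exists>x \<in> D l. t_of l' x' \<ge> t_of l x)"

definition A :: "pt list \<Rightarrow> pt set" where
  "A l = (\<Union>(ts, xs) \<in> set l. {(t, x) \<in> lattice. t \<ge> ts + \<bar>x - xs\<bar>})"

end

theory Submission
  imports Defs
begin

(* Write u = t + x and v = t - x for the light-cone coordinates
   of a point (t, x).  A broken trace l is the graph of a function F = t_of l
   on the integer interval D l = [p0, p1], and along it u is nondecreasing and
   v is nonincreasing (F is 1-Lipschitz).  A trace in C(S) for the rectangle
   S = {a <= u <= b, c <= v <= d} "crosses" S: its inner vertices lie in S and
   its end vertices lie outside, on the boundary.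

   Inside the common domain both conditions
   say F <= G; to the right of F's domain the cone condition reduces to
   G x' - x' >= F p1 - p1, which follows by examining through which side F
   leaves the rectangle.  The case left of F's domain is the mirror image,
   obtained by the reflection x |-> -x, which maps crossings of
   (a, b, c, d) to crossings of (c, d, a, b). *)

section \<open>Broken traces as graphs of functions\<close>

lemma broken_trace_snd_nth:
  assumes "broken_trace l" "i < length l"
  shows "snd (l ! i) = snd (hd l) + int i"
  using assms
proof (induction i)
  case 0
  then show ?case by (simp add: hd_conv_nth)
next
  case (Suc i)
  then show ?case by (simp add: broken_trace_def)
qed

(* Hence a vertex is determined by its x-coordinate, and t_of reads it off. *)
lemma broken_trace_t_of:
  assumes bt: "broken_trace l" and tx: "(t, x) \<in> set l"
  shows "t_of l x = t"
  unfolding t_of_def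
proof (rule the_equality)
  show "(t, x) \<in> set l" by (fact tx)
next
  fix t' assume "(t', x) \<in> set l"
  then obtain j where j: "j < length l" "l ! j = (t', x)" by (metis in_set_conv_nth)
  obtain i where i: "i < length l" "l ! i = (t, x)" using tx by (metis in_set_conv_nth)
  have "int i = int j"
    using broken_trace_snd_nth[OF bt i(1)] broken_trace_snd_nth[OF bt j(1)] i(2) j(2) by simp
  then show "t' = t" using i j by simp
qed

lemma broken_trace_nth:
  assumes bt: "broken_trace l" and i: "i < length l"
  shows "l ! i = (t_of l (snd (hd l) + int i), snd (hd l) + int i)"
proof -
  have "l ! i = (fst (l ! i), snd (hd l) + int i)"
    using broken_trace_snd_nth[OF bt i] by (simp add: prod_eq_iff)
  then show ?thesis
    using broken_trace_t_of[OF bt] nth_mem[OF i] by metis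
qed

lemma broken_trace_length: "broken_trace l \<Longrightarrow> 2 \<le> length l"
  by (simp add: broken_trace_def)

lemma broken_trace_snd_last:
  assumes bt: "broken_trace l"
  shows "snd (last l) = snd (hd l) + int (length l - 1)"
proof -
  have "l \<noteq> []" using broken_trace_length[OF bt] by auto
  then show ?thesis using broken_trace_snd_nth[OF bt, of "length l - 1"] by (simp add: last_conv_nth)
qed

lemma broken_trace_graph:
  assumes bt: "broken_trace l"
  shows "set l = (\<lambda>x. (t_of l x, x)) ` {snd (hd l)..snd (last l)}"
proof
  show "set l \<subseteq> (\<lambda>x. (t_of l x, x)) ` {snd (hd l)..snd (last l)}"
  proof
    fix p assume "p \<in> set l"
    then obtain i where i: "i < length l" "p = l ! i" by (metis in_set_conv_nth)
    then show "p \<in> (\<lambda>x. (t_of l x, x)) ` {snd (hd l)..snd (last l)}"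
      using broken_trace_nth[OF bt i(1)] broken_trace_snd_last[OF bt] by force
  qed
next
  show "(\<lambda>x. (t_of l x, x)) ` {snd (hd l)..snd (last l)} \<subseteq> set l"
  proof
    fix p assume "p \<in> (\<lambda>x. (t_of l x, x)) ` {snd (hd l)..snd (last l)}"
    then obtain x where x: "x \<in> {snd (hd l)..snd (last l)}" "p = (t_of l x, x)" by blast
    define i where "i = nat (x - snd (hd l))"
    have i: "i < length l" "x = snd (hd l) + int i"
      using x(1) broken_trace_snd_last[OF bt] broken_trace_length[OF bt] unfolding i_def by auto
    show "p \<in> set l" using broken_trace_nth[OF bt i(1)] nth_mem[OF i(1)] i(2) x(2) by simp
  qed
qed

lemma D_broken_trace: "broken_trace l \<Longrightarrow> D l = {snd (hd l)..snd (last l)}"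
  unfolding D_def by (simp add: broken_trace_graph image_image)

(* One step changes u = t + x by 0 or 2 and v = t - x by 0 or -2. *)
lemma broken_trace_lightcone_nth:
  assumes bt: "broken_trace l" and "i \<le> j" and j: "j < length l"
  shows "fst (l ! i) + snd (l ! i) \<le> fst (l ! j) + snd (l ! j) \<and>
         fst (l ! j) - snd (l ! j) \<le> fst (l ! i) - snd (l ! i)"
  using \<open>i \<le> j\<close> j
proof (induction j rule: dec_induct)
  case base
  then show ?case by simp
next
  case (step n)
  then have "snd (l ! Suc n) = snd (l ! n) + 1" "fst (l ! Suc n) - fst (l ! n) \<in> {-1, 1}"
    using bt by (simp_all add: broken_trace_def)
  then show ?case using step by auto
qed

lemma broken_trace_lightcone_mono:
  assumes bt: "broken_trace l" and xy: "snd (hd l) \<le> x" "x \<le> y" "y \<le> snd (last l)"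
  shows "t_of l x + x \<le> t_of l y + y \<and> t_of l y - y \<le> t_of l x - x"
proof -
  define i j where "i = nat (x - snd (hd l))" and "j = nat (y - snd (hd l))"
  have ij: "i \<le> j" "j < length l" "x = snd (hd l) + int i" "y = snd (hd l) + int j"
    using xy broken_trace_snd_last[OF bt] broken_trace_length[OF bt] unfolding i_def j_def by auto
  then show ?thesis
    using broken_trace_lightcone_nth[OF bt ij(1,2)]
      broken_trace_nth[OF bt ij(2)] broken_trace_nth[OF bt, of i] by simp
qed

section \<open>Functions crossing a rectangle\<close>

definition in_rect :: "int \<Rightarrow> int \<Rightarrow> int \<Rightarrow> int \<Rightarrow> int \<Rightarrow> int \<Rightarrow> bool" where
  "in_rect a b c d t x \<longleftrightarrow> a \<le> t + x \<and> t + x \<le> b \<and> c \<le> t - x \<and> t - x \<le> d"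

(* F on [p0, p1] is the time profile of a trace in C(S) for the rectangle S:
   monotone light-cone coordinates, lattice parity, inner points in S and
   both end points outside. *)
definition crossing :: "int \<Rightarrow> int \<Rightarrow> int \<Rightarrow> int \<Rightarrow> (int \<Rightarrow> int) \<Rightarrow> int \<Rightarrow> int \<Rightarrow> bool" where
  "crossing a b c d F p0 p1 \<longleftrightarrow>
     p0 + 1 < p1 \<and>
     (\<forall>x y. p0 \<le> x \<longrightarrow> x \<le> y \<longrightarrow> y \<le> p1 \<longrightarrow> F x + x \<le> F y + y \<and> F y - y \<le> F x - x) \<and>
     (\<forall>x\<in>{p0..p1}. even (F x + x)) \<and>
     (\<forall>x. p0 < x \<and> x < p1 \<longrightarrow> in_rect a b c d (F x) x) \<and>
     \<not> in_rect a b c d (F p0) p0 \<and> \<not> in_rect a b c d (F p1) p1"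

lemma in_rect_dom: "(t, x) \<in> rect_dom a b c d \<longleftrightarrow> (t, x) \<in> lattice \<and> in_rect a b c d t x"
  by (auto simp: rect_dom_def in_rect_def)

lemma C_rect_crossing:
  assumes l: "l \<in> C (rect_dom a b c d)"
  shows "crossing a b c d (t_of l) (snd (hd l)) (snd (last l))"
proof -
  let ?S = "rect_dom a b c d" and ?p0 = "snd (hd l)" and ?p1 = "snd (last l)"
  have tr: "trace_in l ?S" and hd_out: "hd l \<notin> ?S" and last_out: "last l \<notin> ?S"
    using l by (auto simp: C_def bdry_def)
  have bt: "broken_trace l" using tr by (simp add: trace_in_def)
  have ne: "l \<noteq> []" using broken_trace_length[OF bt] by auto
  have lattice: "(t_of l x, x) \<in> lattice" if "x \<in> {?p0..?p1}" for x
    using that bt broken_trace_graph[OF bt] by (auto simp: broken_trace_def)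
  have hd_eq: "hd l = (t_of l ?p0, ?p0)" and last_eq: "last l = (t_of l ?p1, ?p1)"
    using broken_trace_t_of[OF bt, of "fst (hd l)"] broken_trace_t_of[OF bt, of "fst (last l)"] ne
    by simp_all
  have inner: "in_rect a b c d (t_of l x) x" if "?p0 < x" "x < ?p1" for x
  proof -
    define i where "i = nat (x - ?p0)"
    have i: "0 < i" "i < length l - 1" "x = ?p0 + int i"
      using that broken_trace_snd_last[OF bt] unfolding i_def by auto
    then have "l ! i \<in> ?S" using tr by (simp add: trace_in_def)
    then show ?thesis using broken_trace_nth[OF bt, of i] i by (simp add: in_rect_dom)
  qed
  (* The first edge has an endpoint in S, so y_1 is in S; hence the trace
     has at least three vertices. *)
  have second_in: "l ! 1 \<in> ?S"
  proof -
    have "{l ! 0, l ! 1} \<in> edges_cl ?S"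
      using tr broken_trace_length[OF bt] by (simp add: trace_in_def)
    then have "l ! 0 \<in> ?S \<or> l ! 1 \<in> ?S" by (auto simp: edges_cl_def doubleton_eq_iff)
    then show ?thesis using hd_out ne by (simp add: hd_conv_nth)
  qed
  have "length l \<noteq> 2" using second_in last_out ne by (auto simp: last_conv_nth)
  then have "?p0 + 1 < ?p1" using broken_trace_snd_last[OF bt] broken_trace_length[OF bt] by simp
  moreover have "\<forall>x y. ?p0 \<le> x \<longrightarrow> x \<le> y \<longrightarrow> y \<le> ?p1 \<longrightarrow>
      t_of l x + x \<le> t_of l y + y \<and> t_of l y - y \<le> t_of l x - x"
    using broken_trace_lightcone_mono[OF bt] by blast
  moreover have "\<forall>x\<in>{?p0..?p1}. even (t_of l x + x)"
    using lattice by (auto simp: lattice_def)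
  moreover have "\<not> in_rect a b c d (t_of l ?p0) ?p0" "\<not> in_rect a b c d (t_of l ?p1) ?p1"
  proof -
    have "?p0 \<le> ?p1" using broken_trace_snd_last[OF bt] by simp
    then have "(t_of l ?p0, ?p0) \<in> lattice" "(t_of l ?p1, ?p1) \<in> lattice" using lattice by auto
    moreover have "(t_of l ?p0, ?p0) \<notin> ?S" "(t_of l ?p1, ?p1) \<notin> ?S"
      using hd_out last_out hd_eq last_eq by metis+
    ultimately show "\<not> in_rect a b c d (t_of l ?p0) ?p0" "\<not> in_rect a b c d (t_of l ?p1) ?p1"
      by (simp_all add: in_rect_dom)
  qed
  ultimately show ?thesis using inner by (simp add: crossing_def)
qed

lemma crossing_mono:
  assumes "crossing a b c d F p0 p1" "p0 \<le> x" "x \<le> y" "y \<le> p1"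
  shows "F x + x \<le> F y + y" "F y - y \<le> F x - x"
  using assms by (auto simp: crossing_def)

(* Monotonicity of u and v is exactly the 1-Lipschitz property of F. *)
lemma crossing_lipschitz:
  assumes F: "crossing a b c d F p0 p1" and "x \<in> {p0..p1}" "y \<in> {p0..p1}"
  shows "F x \<le> F y + \<bar>x - y\<bar>"
proof (cases "x \<le> y")
  case True
  then show ?thesis using crossing_mono[OF F, of x y] assms by auto
next
  case False
  then show ?thesis using crossing_mono[OF F, of y x] assms by auto
qed

(* The reflection x |-> -x exchanges the roles of u and v. *)
lemma crossing_reflect:
  assumes "crossing a b c d F p0 p1"
  shows "crossing c d a b (\<lambda>x. F (- x)) (- p1) (- p0)"
proof -
  have p: "p0 + 1 < p1"
    and mono: "\<And>x y. p0 \<le> x \<Longrightarrow> x \<le> y \<Longrightarrow> y \<le> p1 \<Longrightarrow> F x + x \<le> F y + y \<and> F y - y \<le> F x - x"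
    and parity: "\<And>x. x \<in> {p0..p1} \<Longrightarrow> even (F x + x)"
    and inner: "\<And>x. p0 < x \<Longrightarrow> x < p1 \<Longrightarrow> in_rect a b c d (F x) x"
    and ends: "\<not> in_rect a b c d (F p0) p0" "\<not> in_rect a b c d (F p1) p1"
    using assms unfolding crossing_def by blast+
  have swap: "in_rect c d a b (F (- x)) x \<longleftrightarrow> in_rect a b c d (F (- x)) (- x)" for x
    by (auto simp: in_rect_def)
  have "F (- x) + x \<le> F (- y) + y \<and> F (- y) - y \<le> F (- x) - x"
    if "- p1 \<le> x" "x \<le> y" "y \<le> - p0" for x y
    using mono[of "- y" "- x"] that by simp
  moreover have "even (F (- x) + x)" if "x \<in> {- p1..- p0}" for x
  proof -
    have "even (F (- x) + - x)" using parity[of "- x"] that by simp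
    then show ?thesis by (metis add.commute add_diff_cancel_left' diff_minus_eq_add even_add even_minus)
  qed
  moreover have "in_rect c d a b (F (- x)) x" if "- p1 < x" "x < - p0" for x
    using inner[of "- x"] that swap by simp
  ultimately show ?thesis
    using p ends swap[of "- p0"] swap[of "- p1"] unfolding crossing_def by auto
qed

lemma crossing_inner_bounds:
  assumes F: "crossing a b c d F p0 p1"
  shows "p0 < x \<Longrightarrow> x \<le> p1 \<Longrightarrow> a \<le> F x + x \<and> F x - x \<le> d"
    and "p0 \<le> x \<Longrightarrow> x < p1 \<Longrightarrow> F x + x \<le> b \<and> c \<le> F x - x"
proof -
  have p: "p0 + 1 < p1" and inner: "\<And>x. p0 < x \<Longrightarrow> x < p1 \<Longrightarrow> in_rect a b c d (F x) x"
    using F by (auto simp: crossing_def)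
  show "a \<le> F x + x \<and> F x - x \<le> d" if "p0 < x" "x \<le> p1"
    using inner[of "p0 + 1"] crossing_mono[OF F, of "p0 + 1" x] p that by (auto simp: in_rect_def)
  show "F x + x \<le> b \<and> c \<le> F x - x" if "p0 \<le> x" "x < p1"
    using inner[of "p1 - 1"] crossing_mono[OF F, of x "p1 - 1"] p that by (auto simp: in_rect_def)
qed

lemma crossing_outer_bounds:
  assumes F: "crossing a b c d F p0 p1" and x: "x \<in> {p0..p1}"
  shows "a - 2 \<le> F x + x \<and> F x + x \<le> b + 2 \<and> c - 2 \<le> F x - x \<and> F x - x \<le> d + 2"
proof -
  have p: "p0 + 1 < p1" using F by (simp add: crossing_def)
  have "a - 2 \<le> F x + x \<and> F x - x \<le> d + 2"
    using crossing_inner_bounds(1)[OF F, of "p0 + 1"] crossing_inner_bounds(1)[OF F, of x]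
      crossing_mono[OF F, of p0 "p0 + 1"] p x by (cases "x = p0") auto
  moreover have "F x + x \<le> b + 2 \<and> c - 2 \<le> F x - x"
    using crossing_inner_bounds(2)[OF F, of "p1 - 1"] crossing_inner_bounds(2)[OF F, of x]
      crossing_mono[OF F, of "p1 - 1" p1] p x by (cases "x = p1") auto
  ultimately show ?thesis by blast
qed

(* A crossing leaves the rectangle at p1 through the side u >= b + 2 or v <= c - 2;
   parity turns the strict inequalities into a gap of 2. *)
lemma crossing_exit:
  assumes F: "crossing a b c d F p0 p1" and "even b" "even c"
  shows "b + 2 \<le> F p1 + p1 \<or> F p1 - p1 \<le> c - 2"
proof -
  have p: "p0 < p1" and out: "\<not> in_rect a b c d (F p1) p1" and "even (F p1 + p1)"
    using F by (auto simp: crossing_def)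
  then have "even (F p1 - p1)" by (metis add_diff_cancel_right' even_diff mult_2 mult_2_right)
  moreover have "b < F p1 + p1 \<or> F p1 - p1 < c"
    using out crossing_inner_bounds(1)[OF F, of p1] p by (auto simp: in_rect_def)
  ultimately show ?thesis using \<open>even (F p1 + p1)\<close> \<open>even b\<close> \<open>even c\<close> by presburger
qed

lemma crossing_entry:
  assumes F: "crossing a b c d F p0 p1" and "even a" "even d"
  shows "F p0 + p0 \<le> a - 2 \<or> d + 2 \<le> F p0 - p0"
  using crossing_exit[OF crossing_reflect[OF F] \<open>even d\<close> \<open>even a\<close>] by auto

section \<open>Comparing two crossings\<close>

(* Key step: if G >= F on the common domain and some point of G lies above
   some point of F, then every point of G to the right of F lies in the forward
   light cone of F's last point.  If F exits through u >= b + 2 this is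
   impossible: G would either pass below F at p1, or lie entirely to the right
   of F, strictly below every point of F. *)
lemma crossing_right_cone:
  assumes F: "crossing a b c d F p0 p1" and G: "crossing a b c d G q0 q1"
    and even: "even a" "even b" "even c" "even d"
    and below: "\<And>x. x \<in> {p0..p1} \<Longrightarrow> x \<in> {q0..q1} \<Longrightarrow> F x \<le> G x"
    and witness: "z \<in> {p0..p1}" "z' \<in> {q0..q1}" "F z \<le> G z'"
    and x': "x' \<in> {q0..q1}" "p1 < x'"
  shows "F p1 + (x' - p1) \<le> G x'"
  using crossing_exit[OF F even(2,3)]
proof
  assume low: "F p1 - p1 \<le> c - 2"
  then show ?thesis using crossing_outer_bounds[OF G x'(1)] by linarith
next
  assume high: "b + 2 \<le> F p1 + p1"
  have p: "p0 < p1" and q: "q0 < q1" using F G by (auto simp: crossing_def)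
  have False
  proof (cases "q0 \<le> p1")
    case True
    have "F p1 \<le> G p1" using below[of p1] True x' p by simp
    moreover have "G p1 + p1 \<le> b" using crossing_inner_bounds(2)[OF G, of p1] True x' by simp
    ultimately show False using high by linarith
  next
    case False
    have F_end: "F p1 - p1 \<le> d" using crossing_inner_bounds(1)[OF F, of p1] p by simp
    have G_start: "G q0 + q0 \<le> b" using crossing_inner_bounds(2)[OF G, of q0] q by simp
    show False using crossing_entry[OF G even(1,4)]
    proof
      assume "d + 2 \<le> G q0 - q0"
      then show False using False high F_end G_start by linarith
    next
      assume G_low: "G q0 + q0 \<le> a - 2"
      have "a - 2 \<le> F z + z" using crossing_outer_bounds[OF F witness(1)] by simp
      moreover have "F p1 - p1 \<le> F z - z" using crossing_mono(2)[OF F, of z p1] witness(1) by simp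
      moreover have "G z' + z' \<le> b + 2" using crossing_outer_bounds[OF G witness(2)] by simp
      moreover have "G z' - z' \<le> G q0 - q0" using crossing_mono(2)[OF G, of q0 z'] witness(2) by simp
      ultimately show False using witness(3) G_low False high by linarith
    qed
  qed
  then show ?thesis ..
qed

lemma crossing_left_cone:
  assumes F: "crossing a b c d F p0 p1" and G: "crossing a b c d G q0 q1"
    and even: "even a" "even b" "even c" "even d"
    and below: "\<And>x. x \<in> {p0..p1} \<Longrightarrow> x \<in> {q0..q1} \<Longrightarrow> F x \<le> G x"
    and witness: "z \<in> {p0..p1}" "z' \<in> {q0..q1}" "F z \<le> G z'"
    and x': "x' \<in> {q0..q1}" "x' < p0"
  shows "F p0 + (p0 - x') \<le> G x'"
proof -
  have "F (- (- p0)) + (- x' - - p0) \<le> G (- (- x'))"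
  proof (rule crossing_right_cone[OF crossing_reflect[OF F] crossing_reflect[OF G] even(3,4,1,2)])
    show "F (- x) \<le> G (- x)" if "x \<in> {- p1..- p0}" "x \<in> {- q1..- q0}" for x
      using below[of "- x"] that by auto
    show "- z \<in> {- p1..- p0}" "- z' \<in> {- q1..- q0}" "F (- (- z)) \<le> G (- (- z'))"
      using witness by auto
    show "- x' \<in> {- q1..- q0}" "- p0 < - x'" using x' by auto
  qed
  then show ?thesis by simp
qed

lemma crossing_order_iff_cone:
  assumes F: "crossing a b c d F p0 p1" and G: "crossing a b c d G q0 q1"
    and even: "even a" "even b" "even c" "even d"
  shows "((\<forall>x\<in>{p0..p1} \<inter> {q0..q1}. F x \<le> G x) \<and> (\<exists>x'\<in>{q0..q1}. \<exists>x\<in>{p0..p1}. F x \<le> G x'))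
     \<longleftrightarrow> (\<forall>x'\<in>{q0..q1}. \<exists>x\<in>{p0..p1}. F x + \<bar>x' - x\<bar> \<le> G x')"
    (is "?order \<longleftrightarrow> ?cone")
proof
  assume cone: ?cone
  have "F x \<le> G x" if "x \<in> {p0..p1} \<inter> {q0..q1}" for x
  proof -
    have "x \<in> {q0..q1}" using that by simp
    then obtain y where "y \<in> {p0..p1}" "F y + \<bar>x - y\<bar> \<le> G x" using cone by blast
    then show ?thesis using crossing_lipschitz[OF F, of x y] that by simp
  qed
  moreover have "\<exists>x'\<in>{q0..q1}. \<exists>x\<in>{p0..p1}. F x \<le> G x'"
  proof -
    have "q0 \<in> {q0..q1}" using G by (simp add: crossing_def)
    then show ?thesis using cone by force
  qed
  ultimately show ?order by blast
next
  assume ?order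
  then have below: "\<And>x. x \<in> {p0..p1} \<Longrightarrow> x \<in> {q0..q1} \<Longrightarrow> F x \<le> G x"
    and "\<exists>x'\<in>{q0..q1}. \<exists>x\<in>{p0..p1}. F x \<le> G x'" by auto
  then obtain z z' where witness: "z \<in> {p0..p1}" "z' \<in> {q0..q1}" "F z \<le> G z'" by blast
  have p: "p0 \<in> {p0..p1}" "p1 \<in> {p0..p1}" using F by (auto simp: crossing_def)
  show ?cone
  proof
    fix x' assume x': "x' \<in> {q0..q1}"
    consider "x' \<in> {p0..p1}" | "p1 < x'" | "x' < p0" by fastforce
    then show "\<exists>x\<in>{p0..p1}. F x + \<bar>x' - x\<bar> \<le> G x'"
    proof cases
      case 1
      then show ?thesis using below[OF 1 x'] by force
    next
      case 2
      then show ?thesis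
        using crossing_right_cone[OF F G even below witness x'] p by (intro bexI[of _ p1]) auto
    next
      case 3
      then show ?thesis
        using crossing_left_cone[OF F G even below witness x'] p by (intro bexI[of _ p0]) auto
    qed
  qed
qed

lemma subset_A_iff:
  assumes bt: "broken_trace l" and bt': "broken_trace l'"
  shows "set l' \<subseteq> A l \<longleftrightarrow> (\<forall>x'\<in>D l'. \<exists>x\<in>D l. t_of l x + \<bar>x' - x\<bar> \<le> t_of l' x')"
proof -
  have A_mem: "(t', x') \<in> A l \<longleftrightarrow> (t', x') \<in> lattice \<and> (\<exists>x\<in>D l. t_of l x + \<bar>x' - x\<bar> \<le> t')"
    for t' x'
    unfolding A_def D_broken_trace[OF bt] by (subst broken_trace_graph[OF bt]) auto
  have "set l' \<subseteq> lattice" using bt' by (simp add: broken_trace_def)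
  then show ?thesis
    unfolding D_broken_trace[OF bt'] broken_trace_graph[OF bt'] by (auto simp: A_mem)
qed

theorem mainTheorem7:
  fixes a b c d :: int and l l' :: "pt list"
  assumes "even a" "even b" "even c" "even d" "a \<le> b" "c \<le> d"
    and "rect_dom a b c d \<noteq> {}"
    and "l \<in> C (rect_dom a b c d)" "l' \<in> C (rect_dom a b c d)"
  shows "succeq l' l \<longleftrightarrow> set l' \<subseteq> A l"
proof -
  have bt: "broken_trace l" and bt': "broken_trace l'"
    using assms(8,9) by (simp_all add: C_def trace_in_def)
  have "succeq l' l \<longleftrightarrow>
      (\<forall>x\<in>D l \<inter> D l'. t_of l x \<le> t_of l' x) \<and> (\<exists>x'\<in>D l'. \<exists>x\<in>D l. t_of l x \<le> t_of l' x')"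
    by (simp add: succeq_def)
  also have "\<dots> \<longleftrightarrow> (\<forall>x'\<in>D l'. \<exists>x\<in>D l. t_of l x + \<bar>x' - x\<bar> \<le> t_of l' x')"
    unfolding D_broken_trace[OF bt] D_broken_trace[OF bt']
    by (rule crossing_order_iff_cone[OF C_rect_crossing[OF assms(8)] C_rect_crossing[OF assms(9)] assms(1-4)])
  also have "\<dots> \<longleftrightarrow> set l' \<subseteq> A l"
    by (rule subset_A_iff[OF bt bt', symmetric])
  finally show ?thesis .
qed

end
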